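(* Assume the setting below with bounded measurable reward $r$, measurable transition kernel $P$, measurable policy kernel $\pi$, discount $0\le\gamma<1$ and concentration $\kappa>0$. Let $\mathcal{B}_\infty$ be the space of bounded measurable functions $Q:\mathcal{S}\times\mathbb{S}^{m-1}\to\mathbb{R}$ with the sup norm $\|Q\|_\infty=\sup_{\bm{s},\bm{c}}|Q(\bm{s},\bm{c})|$. Define the smoothed Bellman operator \[ (\mathcal{T}_\kappa^\pi Q)(\bm{s},\bm{c})=\mathbb{E}\Big[r\big(\bm{s},\bm{a}^\star(\bm{s},\tilde{\bm{c}})\big)+\gamma\,Q(\bm{s}',\tilde{\bm{c}}')\Big], \] where $\tilde{\bm{c}}\sim K_\kappa(\cdot\mid\bm{c})$, $\bm{s}'\sim P(\cdot\mid\bm{s},\bm{a}^\star(\bm{s},\tilde{\bm{c}}))$, $\bm{c}'\sim\pi(\cdot\mid\bm{s}')$, $\tilde{\bm{c}}'\sim K_\kappa(\cdot\mid\bm{c}')$. Then: (1) $\mathcal{T}_\kappa^\pi$ maps $\mathcal{B}_\infty$ into itself and is a $\gamma$-contraction on $(\mathcal{B}_\infty,\|\cdot\|_\infty)$; hence it has a unique fixed point $Q_\kappa^\pi\in\mathcal{B}_\infty$. (2) For every $Q\in\mathcal{B}_\infty$ and every $\bm{s}\in\mathcal{S}$, the map $\bm{c}\mapsto(\mathcal{T}_\kappa^\pi Q)(\bm{s},\bm{c})$ is $C^\infty$ on $\mathbb{S}^{m-1}$. (3) Consequently, for every $\bm{s}\in\mathcal{S}$, $\bm{c}\mapsto Q_\kappa^\pi(\bm{s},\bm{c})$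 is $C^\infty$ on $\mathbb{S}^{m-1}$.
   Context: Setting: a discounted MDP with measurable state space $\mathcal{S}$; for each state $\bm{s}$ a finite nonempty feasible set $\mathcal{A}(\bm{s})\subseteq\{0,1\}^m$; a solver mapping $\bm{a}^\star(\bm{s},\bm{c})\in\operatorname*{argmin}_{\bm{a}\in\mathcal{A}(\bm{s})}\bm{c}^\top\bm{a}$ (with deterministic, measurable tie-breaking); reward $r(\bm{s},\bm{a})$; transition kernel $P(\cdot\mid\bm{s},\bm{a})$; a policy $\pi(\cdot\mid\bm{s})$ which is a Markov kernel from $\mathcal{S}$ to the unit sphere $\mathbb{S}^{m-1}=\{\bm{c}\in\mathbb{R}^m:\|\bm{c}\|_2=1\}$. The von Mises–Fisher kernel with concentration $\kappa>0$ is the probability density on $\mathbb{S}^{m-1}$ (w.r.t. surface measure $\sigma$) given by $K_\kappa(\tilde{\bm{c}}\mid\bm{c})=C_m(\kappa)\exp(\kappa\,\bm{c}^\top\tilde{\bm{c}})$, with $C_m(\kappa)$ the normalizing constant. *)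

theory Defs
  imports "HOL-Analysis.Analysis" "HOL-Probability.Probability"
begin

fun iter_partial :: "'a::euclidean_space list \<Rightarrow> ('a \<Rightarrow> real) \<Rightarrow> 'a \<Rightarrow> real" where
  "iter_partial [] f = f"
| "iter_partial (v # vs) f = (\<lambda>x. deriv (\<lambda>t. iter_partial vs f (x + t *\<^sub>R v)) 0)"

definition smooth_on :: "'a::euclidean_space set \<Rightarrow> ('a \<Rightarrow> real) \<Rightarrow> bool" where
  "smooth_on U f \<longleftrightarrow> open U \<and>
     (\<forall>vs. set vs \<subseteq> Basis \<longrightarrow>
        continuous_on U (iter_partial vs f) \<and>
        (\<forall>v\<in>Basis. \<forall>x\<in>U. (\<lambda>t. iter_partial vs f (x + t *\<^sub>R v)) differentiable (at 0)))"

text \<open>C-infinity on the unit sphere (embedded submanifold): extends to a C-infinity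
  function on an open neighbourhood of the sphere.\<close>
definition smooth_on_sphere :: "('a::euclidean_space \<Rightarrow> real) \<Rightarrow> bool" where
  "smooth_on_sphere g \<longleftrightarrow>
     (\<exists>U F. open U \<and> sphere 0 1 \<subseteq> U \<and> smooth_on U F \<and> (\<forall>c\<in>sphere 0 1. F c = g c))"

definition SPH :: "('a::euclidean_space) measure" where
  "SPH = restrict_space borel (sphere 0 1)"

definition sph_proj :: "'a::euclidean_space \<Rightarrow> 'a" where
  "sph_proj x = (if x = 0 then (SOME u. norm u = (1::real)) else x /\<^sub>R norm x)"

text \<open>Surface measure: sigma(A) = m * Lebesgue measure of the cone {t x | x in A, 0 < t <= 1}.\<close>
definition surface_measure :: "('a::euclidean_space) measure" where
  "surface_measure = distr (density (restrict_space lborel (ball 0 1)) (\<lambda>_. ennreal (real DIM('a))))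
                           SPH sph_proj"

definition vmf_const :: "real \<Rightarrow> 'a::euclidean_space \<Rightarrow> real" where
  "vmf_const \<kappa> c = 1 / (\<integral>y. exp (\<kappa> * (c \<bullet> y)) \<partial>surface_measure)"

definition vmf :: "real \<Rightarrow> 'a::euclidean_space \<Rightarrow> 'a measure" where
  "vmf \<kappa> c = density surface_measure (\<lambda>x. ennreal (vmf_const \<kappa> c * exp (\<kappa> * (c \<bullet> x))))"

definition binvecs :: "(real^'m) set" where
  "binvecs = {a. \<forall>i. a $ i \<in> {0, 1}}"

definition ACT :: "(real^'m) measure" where
  "ACT = restrict_space borel binvecs"

definition Bspace :: "'s measure \<Rightarrow> ('s \<times> (real^'m) \<Rightarrow> real) set" where
  "Bspace S = {Q. Q \<in> borel_measurable (S \<Otimes>\<^sub>M SPH) \<and> bounded (Q ` (space S \<times> sphere 0 1))}"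

definition supnorm :: "'s measure \<Rightarrow> ('s \<times> (real^'m) \<Rightarrow> real) \<Rightarrow> real" where
  "supnorm S Q = Sup (insert 0 ((\<lambda>x. \<bar>Q x\<bar>) ` (space S \<times> sphere 0 1)))"

definition bellman ::
  "('s \<Rightarrow> real^'m \<Rightarrow> real) \<Rightarrow> ('s \<Rightarrow> real^'m \<Rightarrow> 's measure) \<Rightarrow> ('s \<Rightarrow> (real^'m) measure)
   \<Rightarrow> ('s \<Rightarrow> real^'m \<Rightarrow> real^'m) \<Rightarrow> real \<Rightarrow> real
   \<Rightarrow> ('s \<times> (real^'m) \<Rightarrow> real) \<Rightarrow> ('s \<times> (real^'m) \<Rightarrow> real)" where
  "bellman r P \<pi> astar \<gamma> \<kappa> Q = (\<lambda>(s, c).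
     \<integral>ct. (r s (astar s ct)
            + \<gamma> * (\<integral>s'. (\<integral>c'. (\<integral>ct'. Q (s', ct') \<partial>vmf \<kappa> c') \<partial>\<pi> s') \<partial>P s (astar s ct)))
     \<partial>vmf \<kappa> c)"

end

theory Submission
  imports Defs
begin

text \<open>
  Each layer of the operator (the von Mises--Fisher average, the policy kernel, the transition
  kernel) integrates a bounded measurable function against a measurable family of probability
  measures; this preserves measurability and bounds and is 1-Lipschitz in the sup norm, so the
  discount makes the operator a \<open>\<gamma>\<close>-contraction of the complete space of bounded measurable
  functions, and Picard iteration from 0 converges uniformly to its unique fixed point.

  For smoothness, the von Mises--Fisher average of a bounded function \<open>g\<close> on the sphere is
  \<open>c \<mapsto> \<integral> g(x) exp(\<kappa> c\<cdot>x) d\<sigma>(x) / \<integral> exp(\<kappa> c\<cdot>x) d\<sigma>(x)\<close>. Differentiating an exponential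
  moment under the integral sign in direction \<open>v\<close> multiplies the integrand by \<open>\<kappa> (v \<cdot> x)\<close>, which
  is again bounded on the sphere. Hence the functions generated by exponential moments and the
  reciprocal normaliser under sums and products form a class of continuous functions closed under
  directional derivatives, so all its members are smooth on the whole space. A fixed point is
  smooth because it coincides with its own image on the sphere.
\<close>

lemma integral_measurable_subprob_algebra2:
  fixes f :: "_ \<Rightarrow> _ \<Rightarrow> real"
  assumes f[measurable]: "(\<lambda>(x, y). f x y) \<in> borel_measurable (M \<Otimes>\<^sub>M N)"
    and L[measurable]: "L \<in> measurable M (subprob_algebra N)"
  shows "(\<lambda>x. integral\<^sup>L (L x) (f x)) \<in> borel_measurable M"
proof -
  note integral_measurable_subprob_algebra[measurable]
  note measurable_distr2[measurable]
  have "(\<lambda>x. integral\<^sup>L (distr (L x) (M \<Otimes>\<^sub>M N) (\<lambda>y. (x, y))) (\<lambda>(x, y). f x y)) \<in> borel_measurable M"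
    by measurable
  then show ?thesis
    by (rule measurable_cong[THEN iffD1, rotated]) (simp add: integral_distr)
qed

lemma measurable_curry_section:
  "(\<lambda>(x, y). f x y) \<in> measurable (M \<Otimes>\<^sub>M N) L \<Longrightarrow> x \<in> space M \<Longrightarrow> f x \<in> measurable N L"
  using measurable_Pair2[of "\<lambda>(x, y). f x y" M N L x] by simp

lemma abs_integral_le_measure:
  fixes g :: "'a \<Rightarrow> real"
  assumes "finite_measure M" and bound: "\<And>x. x \<in> space M \<Longrightarrow> \<bar>g x\<bar> \<le> K"
  shows "\<bar>\<integral>x. g x \<partial>M\<bar> \<le> K * measure M (space M)"
proof (cases "integrable M g")
  case True
  interpret finite_measure M by fact
  have "\<bar>\<integral>x. g x \<partial>M\<bar> \<le> (\<integral>x. \<bar>g x\<bar> \<partial>M)" by (rule integral_abs_bound)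
  also have "\<dots> \<le> (\<integral>x. K \<partial>M)"
    using True bound by (intro integral_mono) auto
  finally show ?thesis by (simp add: mult.commute)
next
  case False
  have "0 \<le> K * measure M (space M)"
  proof (cases "space M = {}")
    case False
    then obtain x where "x \<in> space M" by auto
    with bound have "0 \<le> K" by force
    then show ?thesis by simp
  qed simp
  with False show ?thesis by (simp add: not_integrable_integral_eq)
qed

lemma (in prob_space) abs_integral_le_const:
  fixes f :: "'a \<Rightarrow> real"
  assumes "\<And>x. x \<in> space M \<Longrightarrow> \<bar>f x\<bar> \<le> B"
  shows "\<bar>\<integral>x. f x \<partial>M\<bar> \<le> B"
  using abs_integral_le_measure[OF finite_measure_axioms assms] by (simp add: prob_space)

lemma (in prob_space) abs_integral_diff_le:
  fixes f g :: "'a \<Rightarrow> real"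
  assumes "f \<in> borel_measurable M" "g \<in> borel_measurable M"
    and "\<And>x. x \<in> space M \<Longrightarrow> \<bar>f x\<bar> \<le> Bf" "\<And>x. x \<in> space M \<Longrightarrow> \<bar>g x\<bar> \<le> Bg"
    and "\<And>x. x \<in> space M \<Longrightarrow> \<bar>f x - g x\<bar> \<le> d"
  shows "\<bar>(\<integral>x. f x \<partial>M) - (\<integral>x. g x \<partial>M)\<bar> \<le> d"
proof -
  have "integrable M f" by (rule integrable_const_bound[where B=Bf]) (use assms in auto)
  moreover have "integrable M g" by (rule integrable_const_bound[where B=Bg]) (use assms in auto)
  ultimately
  have "(\<integral>x. f x \<partial>M) - (\<integral>x. g x \<partial>M) = (\<integral>x. f x - g x \<partial>M)" by simp
  also have "\<bar>\<dots>\<bar> \<le> d" by (rule abs_integral_le_const) (use assms in auto)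
  finally show ?thesis .
qed

lemma abs_exp_minus_one_le: "\<bar>exp y - 1\<bar> \<le> \<bar>y\<bar> * exp \<bar>y\<bar>" for y :: real
proof -
  obtain t where t: "\<bar>t\<bar> \<le> \<bar>y\<bar>" "exp y = (\<Sum>m<1. y ^ m / fact m) + exp t / fact 1 * y ^ 1"
    using Maclaurin_exp_le[of y 1] by blast
  then have "exp y - 1 = exp t * y" by simp
  moreover have "exp t \<le> exp \<bar>y\<bar>" using t(1) by simp
  ultimately show ?thesis by (simp add: abs_mult mult.commute mult_left_mono)
qed

lemma abs_exp_minus_one_minus_le: "\<bar>exp y - 1 - y\<bar> \<le> y\<^sup>2 * exp \<bar>y\<bar>" for y :: real
proof -
  obtain t where t: "\<bar>t\<bar> \<le> \<bar>y\<bar>" "exp y = (\<Sum>m<2. y ^ m / fact m) + exp t / fact 2 * y ^ 2"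
    using Maclaurin_exp_le[of y 2] by blast
  then have "\<bar>exp y - 1 - y\<bar> = exp t / 2 * y\<^sup>2" by (simp add: numeral_2_eq_2)
  also have "\<dots> \<le> exp t * y\<^sup>2" by simp
  also have "\<dots> \<le> exp \<bar>y\<bar> * y\<^sup>2" using t(1) by (simp add: mult_right_mono)
  finally show ?thesis by (simp only: mult.commute)
qed

lemma abs_exp_diff_le:
  fixes a a' :: real
  assumes "\<bar>a\<bar> \<le> \<alpha>" "\<bar>a' - a\<bar> \<le> d"
  shows "\<bar>exp a' - exp a\<bar> \<le> exp \<alpha> * (d * exp d)"
proof -
  have "\<bar>exp a' - exp a\<bar> = exp a * \<bar>exp (a' - a) - 1\<bar>"
    by (simp add: exp_diff abs_mult field_simps)
  also have "\<dots> \<le> exp a * (\<bar>a' - a\<bar> * exp \<bar>a' - a\<bar>)"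
    by (intro mult_left_mono abs_exp_minus_one_le) auto
  also have "\<dots> \<le> exp \<alpha> * (d * exp d)"
    using assms by (intro mult_mono) auto
  finally show ?thesis .
qed

lemma abs_exp_difference_quotient_le:
  fixes a b h :: real
  assumes "\<bar>a\<bar> \<le> \<alpha>" "\<bar>b\<bar> \<le> \<beta>" "h \<noteq> 0" "\<bar>h\<bar> \<le> 1"
  shows "\<bar>(exp (a + h * b) - exp a) / h - b * exp a\<bar> \<le> \<bar>h\<bar> * (\<beta>\<^sup>2 * exp \<beta> * exp \<alpha>)"
proof -
  have "\<bar>h\<bar> * \<bar>b\<bar> \<le> 1 * \<beta>"
    using assms by (intro mult_mono) auto
  then have hb: "\<bar>h * b\<bar> \<le> \<beta>" by (simp add: abs_mult)
  have "(exp (a + h * b) - exp a) / h - b * exp a = exp a * (exp (h * b) - 1 - h * b) / h"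
    using assms(3) by (simp add: exp_add field_simps)
  then have "\<bar>(exp (a + h * b) - exp a) / h - b * exp a\<bar> = exp a * \<bar>exp (h * b) - 1 - h * b\<bar> / \<bar>h\<bar>"
    by (simp add: abs_mult)
  also have "\<dots> \<le> exp a * ((h * b)\<^sup>2 * exp \<bar>h * b\<bar>) / \<bar>h\<bar>"
    by (intro divide_right_mono mult_left_mono abs_exp_minus_one_minus_le) auto
  also have "\<dots> = \<bar>h\<bar> * (b\<^sup>2 * exp \<bar>h * b\<bar> * exp a)"
    using assms(3) by (simp add: power2_eq_square field_simps abs_mult_self_eq)
  also have "\<dots> \<le> \<bar>h\<bar> * (\<beta>\<^sup>2 * exp \<beta> * exp \<alpha>)"
  proof (intro mult_left_mono mult_mono)
    show "b\<^sup>2 \<le> \<beta>\<^sup>2" using power_mono[OF assms(2), of 2] by simp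
  qed (use assms hb in auto)
  finally show ?thesis .
qed

lemma has_real_derivative_at_0_of_quotient_bound:
  fixes F :: "real \<Rightarrow> real"
  assumes "\<And>h. h \<noteq> 0 \<Longrightarrow> \<bar>h\<bar> \<le> 1 \<Longrightarrow> \<bar>(F h - F 0) / h - D\<bar> \<le> K * \<bar>h\<bar>"
  shows "(F has_real_derivative D) (at 0)"
proof -
  have "eventually (\<lambda>h. norm ((F h - F 0) / (h - 0) - D) \<le> K * \<bar>h\<bar>) (at 0)"
    unfolding eventually_at by (rule exI[of _ 1]) (use assms in auto)
  moreover have "((\<lambda>h::real. K * \<bar>h\<bar>) \<longlongrightarrow> 0) (at 0)"
    by (auto intro!: tendsto_eq_intros)
  ultimately have "((\<lambda>h. (F h - F 0) / (h - 0) - D) \<longlongrightarrow> 0) (at 0)"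
    by (rule Lim_null_comparison)
  then show ?thesis
    unfolding has_field_derivative_iff by (subst (asm) LIM_zero_iff)
qed

lemma isCont_of_local_Lipschitz:
  fixes f :: "'a::real_normed_vector \<Rightarrow> real"
  assumes "\<And>c'. norm (c' - c) < 1 \<Longrightarrow> \<bar>f c' - f c\<bar> \<le> L * norm (c' - c)"
  shows "isCont f c"
proof -
  have "eventually (\<lambda>c'. norm (f c' - f c) \<le> L * norm (c' - c)) (at c)"
    unfolding eventually_at by (rule exI[of _ 1]) (auto intro!: assms simp: dist_norm)
  moreover have "((\<lambda>c'. L * norm (c' - c)) \<longlongrightarrow> 0) (at c)"
    by (auto intro!: tendsto_eq_intros)
  ultimately have "((\<lambda>c'. f c' - f c) \<longlongrightarrow> 0) (at c)"
    by (rule Lim_null_comparison)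
  then show ?thesis
    unfolding isCont_def by (subst (asm) LIM_zero_iff)
qed

lemma space_SPH[simp]: "space SPH = sphere 0 1"
  by (simp add: SPH_def space_restrict_space)

lemma sets_surface_measure[measurable_cong]: "sets surface_measure = sets SPH"
  by (simp add: surface_measure_def)

lemma space_surface_measure[simp]: "space surface_measure = sphere 0 1"
  by (simp add: surface_measure_def)

lemma sph_proj_in_sphere: "sph_proj x \<in> sphere (0::'a::euclidean_space) 1"
proof (cases "x = 0")
  case True
  obtain b :: 'a where "b \<in> Basis" using nonempty_Basis by blast
  then have "\<exists>u::'a. norm u = 1" by (intro exI[of _ b]) simp
  then have "norm (SOME u::'a. norm u = 1) = 1" by (rule someI_ex)
  then show ?thesis using True by (simp add: sph_proj_def)
qed (simp add: sph_proj_def)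

lemma measurable_sph_proj:
  "sph_proj \<in> measurable (density (restrict_space lborel (ball 0 1)) (\<lambda>_. ennreal (real DIM('a))))
     (SPH :: 'a::euclidean_space measure)"
proof -
  have "sph_proj \<in> measurable borel (borel :: 'a measure)"
    unfolding sph_proj_def by measurable
  then show ?thesis
    unfolding SPH_def measurable_cong_sets[OF sets_density refl]
    by (intro measurable_restrict_space1 measurable_restrict_space2)
       (auto simp: sph_proj_in_sphere[unfolded mem_sphere_0] measurable_cong_sets[OF sets_lborel refl])
qed

lemma emeasure_surface_measure:
  "emeasure (surface_measure :: 'a::euclidean_space measure) (sphere 0 1)
     = ennreal (real DIM('a) * unit_ball_vol (DIM('a)))"
proof -
  let ?N = "density (restrict_space lborel (ball (0::'a) 1)) (\<lambda>_. ennreal (real DIM('a)))"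
  have "emeasure (surface_measure :: 'a measure) (sphere 0 1) = emeasure ?N (sph_proj -` sphere 0 1 \<inter> space ?N)"
    unfolding surface_measure_def
    by (rule emeasure_distr[OF measurable_sph_proj]) (simp add: SPH_def sets_restrict_space_iff)
  also have "sph_proj -` sphere 0 1 \<inter> space ?N = ball 0 1"
    using sph_proj_in_sphere by (auto simp: space_restrict_space)
  also have "emeasure ?N (ball 0 1)
     = (\<integral>\<^sup>+ x. ennreal (real DIM('a)) * indicator (ball 0 1) x \<partial>restrict_space lborel (ball (0::'a) 1))"
    by (rule emeasure_density) (auto simp: sets_restrict_space_iff)
  also have "\<dots> = ennreal (real DIM('a)) * emeasure lborel (ball (0::'a) 1)"
    by (subst nn_integral_cmult_indicator) (auto simp: sets_restrict_space_iff emeasure_restrict_space)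
  also have "\<dots> = ennreal (real DIM('a) * unit_ball_vol (DIM('a)))"
    by (simp add: emeasure_ball ennreal_mult)
  finally show ?thesis .
qed

lemma finite_measure_surface_measure: "finite_measure surface_measure"
  by (rule finite_measureI) (simp add: emeasure_surface_measure)

lemma measure_surface_measure_pos: "0 < measure (surface_measure :: 'a::euclidean_space measure) (sphere 0 1)"
  by (simp add: measure_def emeasure_surface_measure)

lemma borel_measurable_surface_measure:
  "g \<in> borel_measurable borel \<Longrightarrow> g \<in> borel_measurable (surface_measure :: 'a::euclidean_space measure)"
  unfolding measurable_cong_sets[OF sets_surface_measure refl] SPH_def
  by (rule measurable_restrict_space1)

lemma integrable_surface_measure_bounded:
  fixes g :: "'a::euclidean_space \<Rightarrow> real"
  assumes "g \<in> borel_measurable surface_measure" "\<And>x. x \<in> sphere 0 1 \<Longrightarrow> \<bar>g x\<bar> \<le> K"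
  shows "integrable surface_measure g"
  using assms by (intro finite_measure.integrable_const_bound[OF finite_measure_surface_measure, of g K]) auto

section \<open>Exponential moments\<close>

definition exp_moment :: "real \<Rightarrow> ('a::euclidean_space \<Rightarrow> real) \<Rightarrow> 'a \<Rightarrow> real" where
  "exp_moment \<kappa> p c = (\<integral>x. p x * exp (\<kappa> * (c \<bullet> x)) \<partial>surface_measure)"

lemma abs_scaled_inner_le: "x \<in> sphere 0 1 \<Longrightarrow> \<bar>\<kappa> * (c \<bullet> x)\<bar> \<le> \<bar>\<kappa>\<bar> * norm c"
  using Cauchy_Schwarz_ineq2[of c x] by (simp add: abs_mult mult_left_mono)

lemma measurable_times_scaled_inner:
  assumes "p \<in> borel_measurable surface_measure"
  shows "(\<lambda>x. p x * (\<kappa> * (v \<bullet> x))) \<in> borel_measurable (surface_measure :: 'a::euclidean_space measure)"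
proof -
  have "(\<lambda>x. \<kappa> * (v \<bullet> x)) \<in> borel_measurable (borel :: 'a measure)" by measurable
  from borel_measurable_times[OF assms borel_measurable_surface_measure[OF this]] show ?thesis .
qed

lemma abs_times_scaled_inner_le:
  assumes "\<And>x. x \<in> sphere 0 1 \<Longrightarrow> \<bar>p x\<bar> \<le> B" "x \<in> sphere 0 1"
  shows "\<bar>p x * (\<kappa> * (v \<bullet> x))\<bar> \<le> \<bar>B\<bar> * (\<bar>\<kappa>\<bar> * norm v)"
proof -
  have "\<bar>p x\<bar> \<le> \<bar>B\<bar>" using assms by force
  then show ?thesis
    unfolding abs_mult[of "p x"] using abs_scaled_inner_le[OF assms(2), of \<kappa> v] by (intro mult_mono) auto
qed

lemma integrable_exp_moment:
  fixes p :: "'a::euclidean_space \<Rightarrow> real"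
  assumes pm: "p \<in> borel_measurable surface_measure" and pb: "\<And>x. x \<in> sphere 0 1 \<Longrightarrow> \<bar>p x\<bar> \<le> B"
  shows "integrable surface_measure (\<lambda>x. p x * exp (\<kappa> * (c \<bullet> x)))"
proof (rule integrable_surface_measure_bounded)
  show "(\<lambda>x. p x * exp (\<kappa> * (c \<bullet> x))) \<in> borel_measurable surface_measure"
    by (intro borel_measurable_times pm borel_measurable_surface_measure) measurable
  fix x :: 'a assume x: "x \<in> sphere 0 1"
  have "\<bar>p x\<bar> * exp (\<kappa> * (c \<bullet> x)) \<le> B * exp (\<bar>\<kappa>\<bar> * norm c)"
    using pb[OF x] abs_scaled_inner_le[OF x, of \<kappa> c] by (intro mult_mono) auto
  then show "\<bar>p x * exp (\<kappa> * (c \<bullet> x))\<bar> \<le> B * exp (\<bar>\<kappa>\<bar> * norm c)"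
    by (simp add: abs_mult)
qed

lemma exp_moment_has_real_derivative:
  fixes p :: "'a::euclidean_space \<Rightarrow> real"
  assumes pm: "p \<in> borel_measurable surface_measure" and pb: "\<And>x. x \<in> sphere 0 1 \<Longrightarrow> \<bar>p x\<bar> \<le> B"
  shows "((\<lambda>t. exp_moment \<kappa> p (c + t *\<^sub>R v)) has_real_derivative
           exp_moment \<kappa> (\<lambda>x. p x * (\<kappa> * (v \<bullet> x))) c) (at 0)"
proof (rule has_real_derivative_at_0_of_quotient_bound)
  fix h :: real assume h: "h \<noteq> 0" "\<bar>h\<bar> \<le> 1"
  define \<alpha> where "\<alpha> = \<bar>\<kappa>\<bar> * norm c"
  define \<beta> where "\<beta> = \<bar>\<kappa>\<bar> * norm v"
  let ?a = "\<lambda>x. \<kappa> * (c \<bullet> x)" and ?b = "\<lambda>x. \<kappa> * (v \<bullet> x)"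
  have i1: "integrable surface_measure (\<lambda>x. p x * exp (\<kappa> * ((c + h *\<^sub>R v) \<bullet> x)))"
    by (rule integrable_exp_moment[OF pm pb])
  have i0: "integrable surface_measure (\<lambda>x. p x * exp (?a x))"
    by (rule integrable_exp_moment[OF pm pb])
  have "\<bar>p x * ?b x\<bar> \<le> \<bar>B\<bar> * (\<bar>\<kappa>\<bar> * norm v)" if "x \<in> sphere 0 1" for x
    using pb that by (rule abs_times_scaled_inner_le)
  then have iq: "integrable surface_measure (\<lambda>x. p x * ?b x * exp (?a x))"
    by (rule integrable_exp_moment[OF measurable_times_scaled_inner[OF pm]])
  have "(exp_moment \<kappa> p (c + h *\<^sub>R v) - exp_moment \<kappa> p (c + 0 *\<^sub>R v)) / h
          - exp_moment \<kappa> (\<lambda>x. p x * ?b x) c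
      = (\<integral>x. (p x * exp (\<kappa> * ((c + h *\<^sub>R v) \<bullet> x)) - p x * exp (?a x)) / h
            - p x * ?b x * exp (?a x) \<partial>surface_measure)"
    using i1 i0 iq by (simp add: exp_moment_def mult.assoc)
  also have "\<dots> = (\<integral>x. p x * ((exp (?a x + h * ?b x) - exp (?a x)) / h - ?b x * exp (?a x))
                     \<partial>surface_measure)"
    by (simp add: inner_add_left algebra_simps diff_divide_distrib)
  also have "\<bar>\<dots>\<bar> \<le> (\<bar>B\<bar> * (\<bar>h\<bar> * (\<beta>\<^sup>2 * exp \<beta> * exp \<alpha>))) * measure (surface_measure :: 'a measure) (space surface_measure)"
  proof (rule abs_integral_le_measure[OF finite_measure_surface_measure])
    fix x :: 'a assume "x \<in> space surface_measure"
    then have x: "x \<in> sphere 0 1" by simp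
    have "\<bar>(exp (?a x + h * ?b x) - exp (?a x)) / h - ?b x * exp (?a x)\<bar> \<le> \<bar>h\<bar> * (\<beta>\<^sup>2 * exp \<beta> * exp \<alpha>)"
      unfolding \<alpha>_def \<beta>_def
      by (rule abs_exp_difference_quotient_le[OF abs_scaled_inner_le[OF x] abs_scaled_inner_le[OF x] h])
    then show "\<bar>p x * ((exp (?a x + h * ?b x) - exp (?a x)) / h - ?b x * exp (?a x))\<bar>
        \<le> \<bar>B\<bar> * (\<bar>h\<bar> * (\<beta>\<^sup>2 * exp \<beta> * exp \<alpha>))"
      unfolding abs_mult[of "p x"] using pb[OF x] by (intro mult_mono) auto
  qed
  finally show "\<bar>(exp_moment \<kappa> p (c + h *\<^sub>R v) - exp_moment \<kappa> p (c + 0 *\<^sub>R v)) / h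
      - exp_moment \<kappa> (\<lambda>x. p x * ?b x) c\<bar>
      \<le> \<bar>B\<bar> * (\<beta>\<^sup>2 * exp \<beta> * exp \<alpha>) * measure (surface_measure :: 'a measure) (space surface_measure) * \<bar>h\<bar>"
    by (simp add: mult_ac)
qed

lemma isCont_exp_moment:
  fixes p :: "'a::euclidean_space \<Rightarrow> real"
  assumes pm: "p \<in> borel_measurable surface_measure" and pb: "\<And>x. x \<in> sphere 0 1 \<Longrightarrow> \<bar>p x\<bar> \<le> B"
  shows "isCont (exp_moment \<kappa> p) c"
proof (rule isCont_of_local_Lipschitz)
  fix c' :: 'a assume d: "norm (c' - c) < 1"
  define \<alpha> where "\<alpha> = \<bar>\<kappa>\<bar> * norm c"
  have "exp_moment \<kappa> p c' - exp_moment \<kappa> p c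
      = (\<integral>x. p x * (exp (\<kappa> * (c' \<bullet> x)) - exp (\<kappa> * (c \<bullet> x))) \<partial>surface_measure)"
    using integrable_exp_moment[OF pm pb] by (simp add: exp_moment_def algebra_simps)
  also have "\<bar>\<dots>\<bar> \<le> (\<bar>B\<bar> * (exp \<alpha> * (\<bar>\<kappa>\<bar> * norm (c' - c) * exp \<bar>\<kappa>\<bar>)))
                       * measure (surface_measure :: 'a measure) (space surface_measure)"
  proof (rule abs_integral_le_measure[OF finite_measure_surface_measure])
    fix x :: 'a assume "x \<in> space surface_measure"
    then have x: "x \<in> sphere 0 1" by simp
    have "\<bar>\<kappa> * (c' \<bullet> x) - \<kappa> * (c \<bullet> x)\<bar> \<le> \<bar>\<kappa>\<bar> * norm (c' - c)"
      using abs_scaled_inner_le[OF x, of \<kappa> "c' - c"] by (simp add: inner_diff_left algebra_simps)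
    then have "\<bar>exp (\<kappa> * (c' \<bullet> x)) - exp (\<kappa> * (c \<bullet> x))\<bar>
        \<le> exp \<alpha> * (\<bar>\<kappa>\<bar> * norm (c' - c) * exp (\<bar>\<kappa>\<bar> * norm (c' - c)))"
      unfolding \<alpha>_def by (rule abs_exp_diff_le[OF abs_scaled_inner_le[OF x]])
    also have "\<dots> \<le> exp \<alpha> * (\<bar>\<kappa>\<bar> * norm (c' - c) * exp \<bar>\<kappa>\<bar>)"
      using d by (intro mult_left_mono) (auto simp: mult_left_le)
    finally show "\<bar>p x * (exp (\<kappa> * (c' \<bullet> x)) - exp (\<kappa> * (c \<bullet> x)))\<bar>
        \<le> \<bar>B\<bar> * (exp \<alpha> * (\<bar>\<kappa>\<bar> * norm (c' - c) * exp \<bar>\<kappa>\<bar>))"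
      unfolding abs_mult[of "p x"] using pb[OF x] by (intro mult_mono) auto
  qed
  finally show "\<bar>exp_moment \<kappa> p c' - exp_moment \<kappa> p c\<bar>
      \<le> \<bar>B\<bar> * exp \<alpha> * \<bar>\<kappa>\<bar> * exp \<bar>\<kappa>\<bar> * measure (surface_measure :: 'a measure) (space surface_measure) * norm (c' - c)"
    by (simp add: mult_ac)
qed

lemma exp_moment_one_pos: "0 < exp_moment \<kappa> (\<lambda>_. 1) (c :: 'a::euclidean_space)"
proof -
  have "0 < (\<integral>x. exp (- (\<bar>\<kappa>\<bar> * norm c)) \<partial>(surface_measure :: 'a measure))"
    using measure_surface_measure_pos[where 'a='a] by simp
  also have "\<dots> \<le> (\<integral>x. exp (\<kappa> * (c \<bullet> x)) \<partial>surface_measure)"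
  proof (rule integral_mono)
    show "integrable (surface_measure :: 'a measure) (\<lambda>x. exp (- (\<bar>\<kappa>\<bar> * norm c)))"
      using finite_measure.integrable_const[OF finite_measure_surface_measure] by blast
    show "integrable (surface_measure :: 'a measure) (\<lambda>x. exp (\<kappa> * (c \<bullet> x)))"
      using integrable_exp_moment[of "\<lambda>_. 1" 1 \<kappa> c] by simp
    fix x :: 'a assume "x \<in> space surface_measure"
    then show "exp (- (\<bar>\<kappa>\<bar> * norm c)) \<le> exp (\<kappa> * (c \<bullet> x))"
      using abs_scaled_inner_le[of x \<kappa> c] by simp
  qed
  finally show ?thesis by (simp add: exp_moment_def)
qed

inductive_set moment_class :: "real \<Rightarrow> ('a::euclidean_space \<Rightarrow> real) set" for \<kappa> where
  exp_moment: "p \<in> borel_measurable surface_measure \<Longrightarrow> (\<And>x. x \<in> sphere 0 1 \<Longrightarrow> \<bar>p x\<bar> \<le> B)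
    \<Longrightarrow> exp_moment \<kappa> p \<in> moment_class \<kappa>"
| inverse_normaliser: "(\<lambda>c. 1 / exp_moment \<kappa> (\<lambda>_. 1) c) \<in> moment_class \<kappa>"
| add: "f \<in> moment_class \<kappa> \<Longrightarrow> g \<in> moment_class \<kappa> \<Longrightarrow> (\<lambda>c. f c + g c) \<in> moment_class \<kappa>"
| mult: "f \<in> moment_class \<kappa> \<Longrightarrow> g \<in> moment_class \<kappa> \<Longrightarrow> (\<lambda>c. f c * g c) \<in> moment_class \<kappa>"

lemma moment_class_isCont: "f \<in> moment_class \<kappa> \<Longrightarrow> isCont f c"
proof (induction rule: moment_class.induct)
  case (exp_moment p B)
  then show ?case by (rule isCont_exp_moment)
next
  case inverse_normaliser
  have "isCont (exp_moment \<kappa> (\<lambda>_. 1)) c" by (rule isCont_exp_moment[of _ 1]) auto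
  then show ?case using exp_moment_one_pos[of \<kappa> c] by (intro isCont_divide) auto
qed (auto intro: isCont_add isCont_mult)

lemma inverse_normaliser_has_real_derivative:
  fixes \<kappa> :: real and c v :: "'a::euclidean_space"
  defines "Z \<equiv> exp_moment \<kappa> (\<lambda>_. 1)"
  shows "((\<lambda>t. 1 / Z (c + t *\<^sub>R v)) has_real_derivative
           exp_moment \<kappa> (\<lambda>x. - 1 * (\<kappa> * (v \<bullet> x))) c * (1 / Z c * (1 / Z c))) (at 0)"
proof -
  have "((\<lambda>t. Z (c + t *\<^sub>R v)) has_real_derivative exp_moment \<kappa> (\<lambda>x. 1 * (\<kappa> * (v \<bullet> x))) c) (at 0)"
    unfolding Z_def by (rule exp_moment_has_real_derivative[of _ 1]) auto
  moreover have "exp_moment \<kappa> (\<lambda>x. - 1 * (\<kappa> * (v \<bullet> x))) c = - exp_moment \<kappa> (\<lambda>x. 1 * (\<kappa> * (v \<bullet> x))) c"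
    unfolding exp_moment_def by (subst integral_minus[symmetric]) simp
  ultimately show ?thesis
    using exp_moment_one_pos[of \<kappa> c] unfolding Z_def
    by (auto intro!: derivative_eq_intros simp: power2_eq_square)
qed

lemma moment_class_directional_derivative:
  assumes "f \<in> moment_class \<kappa>"
  shows "\<exists>g\<in>moment_class \<kappa>. \<forall>c. ((\<lambda>t. f (c + t *\<^sub>R v)) has_real_derivative g c) (at 0)"
  using assms
proof (induction rule: moment_class.induct)
  case (exp_moment p B)
  have "exp_moment \<kappa> (\<lambda>x. p x * (\<kappa> * (v \<bullet> x))) \<in> moment_class \<kappa>"
    by (rule moment_class.exp_moment[OF measurable_times_scaled_inner abs_times_scaled_inner_le])
       (rule exp_moment)+
  with exp_moment_has_real_derivative[OF exp_moment] show ?case by blast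
next
  case inverse_normaliser
  let ?Z = "exp_moment \<kappa> (\<lambda>_. 1)"
  have "exp_moment \<kappa> (\<lambda>x. - 1 * (\<kappa> * (v \<bullet> x))) \<in> moment_class \<kappa>"
    by (rule moment_class.exp_moment[OF measurable_times_scaled_inner abs_times_scaled_inner_le[of "\<lambda>_. - 1" 1]])
       auto
  then have "(\<lambda>c. exp_moment \<kappa> (\<lambda>x. - 1 * (\<kappa> * (v \<bullet> x))) c * (1 / ?Z c * (1 / ?Z c))) \<in> moment_class \<kappa>"
    by (intro moment_class.mult moment_class.inverse_normaliser)
  then show ?case
    by (rule bexI[rotated]) (use inverse_normaliser_has_real_derivative in blast)
next
  case (add f g)
  then obtain f' g' where f': "f' \<in> moment_class \<kappa>" "\<And>c. ((\<lambda>t. f (c + t *\<^sub>R v)) has_real_derivative f' c) (at 0)"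
    and g': "g' \<in> moment_class \<kappa>" "\<And>c. ((\<lambda>t. g (c + t *\<^sub>R v)) has_real_derivative g' c) (at 0)"
    by blast
  show ?case
    by (rule bexI[of _ "\<lambda>c. f' c + g' c"]) (use f' g' in \<open>auto intro!: DERIV_add moment_class.add\<close>)
next
  case (mult f g)
  then obtain f' g' where f': "f' \<in> moment_class \<kappa>" "\<And>c. ((\<lambda>t. f (c + t *\<^sub>R v)) has_real_derivative f' c) (at 0)"
    and g': "g' \<in> moment_class \<kappa>" "\<And>c. ((\<lambda>t. g (c + t *\<^sub>R v)) has_real_derivative g' c) (at 0)"
    by blast
  have "((\<lambda>t. f (c + t *\<^sub>R v) * g (c + t *\<^sub>R v)) has_real_derivative f' c * g c + g' c * f c) (at 0)" for c
    using DERIV_mult[OF f'(2) g'(2)] by simp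
  then show ?case
    by (intro bexI[of _ "\<lambda>c. f' c * g c + g' c * f c"])
       (use f' g' mult in \<open>auto intro!: moment_class.add moment_class.mult\<close>)
qed

lemma moment_class_iter_partial: "f \<in> moment_class \<kappa> \<Longrightarrow> iter_partial vs f \<in> moment_class \<kappa>"
proof (induction vs)
  case (Cons v vs)
  then obtain g where g: "g \<in> moment_class \<kappa>"
    "\<And>c. ((\<lambda>t. iter_partial vs f (c + t *\<^sub>R v)) has_real_derivative g c) (at 0)"
    using moment_class_directional_derivative by blast
  have "iter_partial (v # vs) f = g"
    using DERIV_imp_deriv[OF g(2)] by (auto simp: fun_eq_iff)
  with g(1) show ?case by simp
qed simp

lemma smooth_on_moment_class: "f \<in> moment_class \<kappa> \<Longrightarrow> smooth_on UNIV f"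
  unfolding smooth_on_def
proof (intro conjI allI impI ballI)
  fix vs :: "'a list" and v x
  assume "f \<in> moment_class \<kappa>"
  then have h: "iter_partial vs f \<in> moment_class \<kappa>" by (rule moment_class_iter_partial)
  then show "continuous_on UNIV (iter_partial vs f)"
    by (intro continuous_at_imp_continuous_on ballI moment_class_isCont)
  from moment_class_directional_derivative[OF h, of v] obtain g where
    "((\<lambda>t. iter_partial vs f (x + t *\<^sub>R v)) has_real_derivative g x) (at 0)" by blast
  then show "(\<lambda>t. iter_partial vs f (x + t *\<^sub>R v)) differentiable at 0"
    using real_differentiable_def by blast
qed simp

lemma smooth_on_sphere_cong:
  "(\<And>c. c \<in> sphere 0 1 \<Longrightarrow> f c = g c) \<Longrightarrow> smooth_on_sphere f \<longleftrightarrow> smooth_on_sphere g"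
  unfolding smooth_on_sphere_def by simp

section \<open>The von Mises--Fisher kernel\<close>

lemma sets_vmf[measurable_cong]: "sets (vmf \<kappa> c) = sets SPH"
  by (simp add: vmf_def sets_surface_measure)

lemma space_vmf[simp]: "space (vmf \<kappa> c) = sphere 0 1"
  by (simp add: vmf_def)

lemma vmf_const_eq: "vmf_const \<kappa> c = 1 / exp_moment \<kappa> (\<lambda>_. 1) c"
  by (simp add: vmf_const_def exp_moment_def)

lemma vmf_density_nonneg: "0 \<le> vmf_const \<kappa> c * exp (\<kappa> * (c \<bullet> x))"
  using exp_moment_one_pos[of \<kappa> c] by (simp add: vmf_const_eq)

lemma integral_vmf:
  fixes g :: "'a::euclidean_space \<Rightarrow> real"
  assumes g: "g \<in> borel_measurable surface_measure"
  shows "(\<integral>x. g x \<partial>vmf \<kappa> c) = exp_moment \<kappa> g c / exp_moment \<kappa> (\<lambda>_. 1) c"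
proof -
  have "(\<integral>x. g x \<partial>vmf \<kappa> c) = (\<integral>x. (vmf_const \<kappa> c * exp (\<kappa> * (c \<bullet> x))) *\<^sub>R g x \<partial>surface_measure)"
    unfolding vmf_def
    by (rule integral_density[OF g]) (auto intro!: borel_measurable_surface_measure vmf_density_nonneg)
  also have "\<dots> = (\<integral>x. vmf_const \<kappa> c * (g x * exp (\<kappa> * (c \<bullet> x))) \<partial>surface_measure)"
    by (simp add: mult_ac)
  also have "\<dots> = vmf_const \<kappa> c * exp_moment \<kappa> g c"
    unfolding exp_moment_def by (rule integral_mult_right_zero)
  finally show ?thesis by (simp add: vmf_const_eq)
qed

lemma prob_space_vmf: "prob_space (vmf \<kappa> (c::'a::euclidean_space))"
proof (rule prob_spaceI)
  have "emeasure (vmf \<kappa> c) (space (vmf \<kappa> c))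
      = (\<integral>\<^sup>+x. ennreal (vmf_const \<kappa> c * exp (\<kappa> * (c \<bullet> x))) \<partial>surface_measure)"
    unfolding vmf_def
    by (subst emeasure_density)
       (auto intro!: nn_integral_cong borel_measurable_surface_measure
             simp: sets_surface_measure SPH_def sets_restrict_space_iff)
  also have "\<dots> = ennreal (vmf_const \<kappa> c * exp_moment \<kappa> (\<lambda>_. 1) c)"
    using integrable_exp_moment[of "\<lambda>_. 1" 1 \<kappa> c]
    by (subst nn_integral_eq_integral) (auto simp: exp_moment_def vmf_density_nonneg)
  also have "\<dots> = 1"
    using exp_moment_one_pos[of \<kappa> c] by (simp add: vmf_const_eq)
  finally show "emeasure (vmf \<kappa> c) (space (vmf \<kappa> c)) = 1" .
qed

lemma borel_measurable_integral_vmf: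
  fixes F :: "'s \<times> 'a::euclidean_space \<Rightarrow> real"
  assumes F[measurable]: "F \<in> borel_measurable (M \<Otimes>\<^sub>M SPH)"
  shows "(\<lambda>(s, c). \<integral>ct. F (s, ct) \<partial>vmf \<kappa> c) \<in> borel_measurable (M \<Otimes>\<^sub>M SPH)"
proof -
  have [measurable]: "(\<lambda>c. 1 / exp_moment \<kappa> (\<lambda>_. 1) c) \<in> borel_measurable (borel :: 'a measure)"
    by (intro borel_measurable_continuous_onI continuous_at_imp_continuous_on ballI
              moment_class_isCont[OF moment_class.inverse_normaliser])
  have [measurable]: "(\<lambda>x. x) \<in> borel_measurable (surface_measure :: 'a measure)"
    by (rule borel_measurable_surface_measure) simp
  interpret finite_measure "surface_measure :: 'a measure"
    by (rule finite_measure_surface_measure)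
  have "(\<lambda>(s, c). 1 / exp_moment \<kappa> (\<lambda>_. 1) c * exp_moment \<kappa> (\<lambda>x. F (s, x)) c) \<in> borel_measurable (M \<Otimes>\<^sub>M SPH)"
    unfolding exp_moment_def by measurable
  then show ?thesis
  proof (rule measurable_cong[THEN iffD1, rotated])
    fix w :: "'s \<times> 'a" assume "w \<in> space (M \<Otimes>\<^sub>M SPH)"
    then obtain s c where w: "w = (s, c)" "s \<in> space M" by (auto simp: space_pair_measure)
    have "(\<lambda>x. F (s, x)) \<in> borel_measurable surface_measure"
      unfolding measurable_cong_sets[OF sets_surface_measure refl] by (rule measurable_Pair2[OF F w(2)])
    then show "(case w of (s, c) \<Rightarrow> 1 / exp_moment \<kappa> (\<lambda>_. 1) c * exp_moment \<kappa> (\<lambda>x. F (s, x)) c)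
        = (case w of (s, c) \<Rightarrow> \<integral>ct. F (s, ct) \<partial>vmf \<kappa> c)"
      unfolding w(1) by (simp add: integral_vmf)
  qed
qed

section \<open>Bounded measurable functions and the sup norm\<close>

lemma Bspace_iff:
  "Q \<in> Bspace S \<longleftrightarrow> Q \<in> borel_measurable (S \<Otimes>\<^sub>M SPH) \<and> (\<exists>B. \<forall>x\<in>space S \<times> sphere 0 1. \<bar>Q x\<bar> \<le> B)"
  unfolding Bspace_def bounded_iff by auto

lemma BspaceE:
  assumes "Q \<in> Bspace S"
  obtains B where "Q \<in> borel_measurable (S \<Otimes>\<^sub>M SPH)" "\<And>x. x \<in> space S \<times> sphere 0 1 \<Longrightarrow> \<bar>Q x\<bar> \<le> B"
  using assms unfolding Bspace_iff by blast

lemma abs_le_supnorm: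
  assumes "\<And>x. x \<in> space S \<times> sphere 0 1 \<Longrightarrow> \<bar>f x\<bar> \<le> B" "x \<in> space S \<times> sphere 0 1"
  shows "\<bar>f x\<bar> \<le> supnorm S f"
  unfolding supnorm_def
proof (rule cSup_upper)
  show "\<bar>f x\<bar> \<in> insert 0 ((\<lambda>x. \<bar>f x\<bar>) ` (space S \<times> sphere 0 1))" using assms(2) by blast
  show "bdd_above (insert 0 ((\<lambda>x. \<bar>f x\<bar>) ` (space S \<times> sphere 0 1)))"
    by (rule bdd_aboveI[of _ "max 0 B"]) (use assms(1) in force)
qed

lemma supnorm_nonneg:
  assumes "\<And>x. x \<in> space S \<times> sphere 0 1 \<Longrightarrow> \<bar>f x\<bar> \<le> B"
  shows "0 \<le> supnorm S f"
  unfolding supnorm_def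
proof (rule cSup_upper)
  show "bdd_above (insert 0 ((\<lambda>x. \<bar>f x\<bar>) ` (space S \<times> sphere 0 1)))"
    by (rule bdd_aboveI[of _ "max 0 B"]) (use assms in force)
qed simp

lemma supnorm_le:
  assumes "0 \<le> b" "\<And>x. x \<in> space S \<times> sphere 0 1 \<Longrightarrow> \<bar>f x\<bar> \<le> b"
  shows "supnorm S f \<le> b"
  unfolding supnorm_def by (rule cSup_least) (use assms in auto)

lemma supnorm_cong:
  "(\<And>x. x \<in> space S \<times> sphere 0 1 \<Longrightarrow> f x = g x) \<Longrightarrow> supnorm S f = supnorm S g"
  unfolding supnorm_def by (metis (no_types, lifting) image_cong)

lemma Bspace_diff_bounded:
  assumes "Q1 \<in> Bspace S" "Q2 \<in> Bspace S"
  obtains B where "\<And>x. x \<in> space S \<times> sphere 0 1 \<Longrightarrow> \<bar>Q1 x - Q2 x\<bar> \<le> B"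
proof -
  obtain B1 B2 where "\<And>x. x \<in> space S \<times> sphere 0 1 \<Longrightarrow> \<bar>Q1 x\<bar> \<le> B1"
    "\<And>x. x \<in> space S \<times> sphere 0 1 \<Longrightarrow> \<bar>Q2 x\<bar> \<le> B2"
    using assms by (metis BspaceE)
  then have "\<And>x. x \<in> space S \<times> sphere 0 1 \<Longrightarrow> \<bar>Q1 x - Q2 x\<bar> \<le> B1 + B2"
    by (smt (verit))
  then show thesis by (rule that)
qed

lemma abs_diff_le_supnorm:
  "Q1 \<in> Bspace S \<Longrightarrow> Q2 \<in> Bspace S \<Longrightarrow> x \<in> space S \<times> sphere 0 1
    \<Longrightarrow> \<bar>Q1 x - Q2 x\<bar> \<le> supnorm S (\<lambda>x. Q1 x - Q2 x)"
  by (erule (1) Bspace_diff_bounded) (rule abs_le_supnorm)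

lemma supnorm_diff_nonneg:
  "Q1 \<in> Bspace S \<Longrightarrow> Q2 \<in> Bspace S \<Longrightarrow> 0 \<le> supnorm S (\<lambda>x. Q1 x - Q2 x)"
  by (erule (1) Bspace_diff_bounded) (rule supnorm_nonneg)

lemma Bspace_complete:
  fixes Qn :: "nat \<Rightarrow> 's \<times> (real^'m) \<Rightarrow> real"
  assumes Qn: "\<And>n. Qn n \<in> Bspace S"
    and cauchy: "\<And>n m x. n \<le> m \<Longrightarrow> x \<in> space S \<times> sphere 0 1 \<Longrightarrow> \<bar>Qn m x - Qn n x\<bar> \<le> e n"
    and e: "e \<longlonglongrightarrow> 0"
  obtains Qs where "Qs \<in> Bspace S" "\<And>n x. x \<in> space S \<times> sphere 0 1 \<Longrightarrow> \<bar>Qs x - Qn n x\<bar> \<le> e n"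
proof -
  let ?D = "space S \<times> (sphere 0 1 :: (real^'m) set)"
  define Qs where "Qs x = lim (\<lambda>n. Qn n x)" for x
  have "Cauchy (\<lambda>n. Qn n x)" if x: "x \<in> ?D" for x
  proof (rule CauchyI)
    fix \<epsilon> :: real assume "0 < \<epsilon>"
    then obtain N where N: "\<And>n. n \<ge> N \<Longrightarrow> norm (e n - 0) < \<epsilon> / 2"
      using LIMSEQ_D[OF e, of "\<epsilon> / 2"] by auto
    have "\<bar>Qn m x - Qn n x\<bar> < \<epsilon>" if "m \<ge> N" "n \<ge> N" for m n
      using cauchy[OF that(1) x] cauchy[OF that(2) x] N[of N] by simp
    then show "\<exists>M. \<forall>m\<ge>M. \<forall>n\<ge>M. norm (Qn m x - Qn n x) < \<epsilon>" by auto
  qed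
  then have conv: "(\<lambda>n. Qn n x) \<longlonglongrightarrow> Qs x" if "x \<in> ?D" for x
    unfolding Qs_def using that by (simp add: Cauchy_convergent_iff convergent_LIMSEQ_iff)
  have tail: "\<bar>Qs x - Qn n x\<bar> \<le> e n" if x: "x \<in> ?D" for n x
  proof (rule LIMSEQ_le_const2)
    show "(\<lambda>m. \<bar>Qn m x - Qn n x\<bar>) \<longlonglongrightarrow> \<bar>Qs x - Qn n x\<bar>"
      by (intro tendsto_intros conv[OF x])
    show "\<exists>N. \<forall>m\<ge>N. \<bar>Qn m x - Qn n x\<bar> \<le> e n"
      using cauchy[OF _ x] by blast
  qed
  obtain B where B: "\<And>x. x \<in> ?D \<Longrightarrow> \<bar>Qn 0 x\<bar> \<le> B" using BspaceE[OF Qn] by blast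
  have "Qs \<in> borel_measurable (S \<Otimes>\<^sub>M SPH)"
    by (rule borel_measurable_LIMSEQ_metric[of Qn])
       (use Qn conv in \<open>auto simp: Bspace_iff space_pair_measure\<close>)
  moreover have "\<bar>Qs x\<bar> \<le> B + e 0" if "x \<in> ?D" for x
    using tail[OF that, of 0] B[OF that] by linarith
  ultimately have "Qs \<in> Bspace S" unfolding Bspace_iff by blast
  from this tail show thesis by (rule that)
qed

locale Bspace_contraction =
  fixes S :: "'s measure" and T :: "('s \<times> (real^'m) \<Rightarrow> real) \<Rightarrow> 's \<times> (real^'m) \<Rightarrow> real" and \<gamma> :: real
  assumes maps_Bspace: "Q \<in> Bspace S \<Longrightarrow> T Q \<in> Bspace S"
    and contraction: "Q1 \<in> Bspace S \<Longrightarrow> Q2 \<in> Bspace S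
      \<Longrightarrow> supnorm S (\<lambda>x. T Q1 x - T Q2 x) \<le> \<gamma> * supnorm S (\<lambda>x. Q1 x - Q2 x)"
    and \<gamma>_nonneg: "0 \<le> \<gamma>" and \<gamma>_less_1: "\<gamma> < 1"
begin

lemma abs_diff_image_le:
  assumes Q: "Q1 \<in> Bspace S" "Q2 \<in> Bspace S"
    and d: "\<And>x. x \<in> space S \<times> sphere 0 1 \<Longrightarrow> \<bar>Q1 x - Q2 x\<bar> \<le> d"
    and x: "x \<in> space S \<times> sphere 0 1"
  shows "\<bar>T Q1 x - T Q2 x\<bar> \<le> \<gamma> * d"
proof -
  have "0 \<le> d" using d[OF x] by linarith
  have "\<bar>T Q1 x - T Q2 x\<bar> \<le> supnorm S (\<lambda>x. T Q1 x - T Q2 x)"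
    using Q x by (intro abs_diff_le_supnorm maps_Bspace)
  also have "\<dots> \<le> \<gamma> * supnorm S (\<lambda>x. Q1 x - Q2 x)"
    using Q by (rule contraction)
  also have "\<dots> \<le> \<gamma> * d"
    using \<open>0 \<le> d\<close> d \<gamma>_nonneg by (intro mult_left_mono supnorm_le) auto
  finally show ?thesis .
qed

lemma iterate_Bspace: "Q \<in> Bspace S \<Longrightarrow> (T ^^ n) Q \<in> Bspace S"
  by (induction n) (auto intro: maps_Bspace)

lemma abs_iterate_diff_le:
  assumes Q: "Q \<in> Bspace S" and "n \<le> m" and x: "x \<in> space S \<times> sphere 0 1"
  shows "\<bar>(T ^^ m) Q x - (T ^^ n) Q x\<bar> \<le> \<gamma> ^ n / (1 - \<gamma>) * supnorm S (\<lambda>x. T Q x - Q x)"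
proof -
  define d where "d = supnorm S (\<lambda>x. T Q x - Q x)"
  have "0 \<le> d" unfolding d_def using Q by (intro supnorm_diff_nonneg maps_Bspace)
  have one_step: "supnorm S (\<lambda>x. (T ^^ Suc k) Q x - (T ^^ k) Q x) \<le> \<gamma> ^ k * d" for k
  proof (induction k)
    case (Suc k)
    have "supnorm S (\<lambda>x. (T ^^ Suc (Suc k)) Q x - (T ^^ Suc k) Q x)
        \<le> \<gamma> * supnorm S (\<lambda>x. (T ^^ Suc k) Q x - (T ^^ k) Q x)"
      using Q by (simp add: contraction iterate_Bspace maps_Bspace)
    also have "\<dots> \<le> \<gamma> * (\<gamma> ^ k * d)" using Suc \<gamma>_nonneg by (intro mult_left_mono)
    finally show ?case by simp
  qed (simp add: d_def)
  have "\<bar>(T ^^ m) Q x - (T ^^ n) Q x\<bar> \<le> (\<gamma> ^ n - \<gamma> ^ m) / (1 - \<gamma>) * d"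
    using \<open>n \<le> m\<close>
  proof (induction m rule: dec_induct)
    case (step m)
    have "\<bar>(T ^^ Suc m) Q x - (T ^^ m) Q x\<bar> \<le> supnorm S (\<lambda>x. (T ^^ Suc m) Q x - (T ^^ m) Q x)"
      by (intro abs_diff_le_supnorm iterate_Bspace Q x)
    also have "\<dots> \<le> \<gamma> ^ m * d" by (rule one_step)
    finally
    have "\<bar>(T ^^ Suc m) Q x - (T ^^ n) Q x\<bar> \<le> \<gamma> ^ m * d + (\<gamma> ^ n - \<gamma> ^ m) / (1 - \<gamma>) * d"
      using step.IH by linarith
    also have "\<dots> = (\<gamma> ^ n - \<gamma> ^ Suc m) / (1 - \<gamma>) * d"
      using \<gamma>_less_1 by (simp add: field_simps)
    finally show ?case .
  qed simp
  also have "\<dots> \<le> \<gamma> ^ n / (1 - \<gamma>) * d"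
    using \<gamma>_nonneg \<gamma>_less_1 \<open>0 \<le> d\<close> by (intro mult_right_mono divide_right_mono) auto
  finally show ?thesis unfolding d_def .
qed

lemma fixpoint_exists: "\<exists>Qs\<in>Bspace S. \<forall>x\<in>space S \<times> sphere 0 1. T Qs x = Qs x"
proof -
  define Q0 :: "'s \<times> (real^'m) \<Rightarrow> real" where "Q0 = (\<lambda>_. 0)"
  have Q0: "Q0 \<in> Bspace S" unfolding Q0_def Bspace_iff by auto
  define e where "e n = \<gamma> ^ n / (1 - \<gamma>) * supnorm S (\<lambda>x. T Q0 x - Q0 x)" for n
  have "e \<longlonglongrightarrow> 0 / (1 - \<gamma>) * supnorm S (\<lambda>x. T Q0 x - Q0 x)"
    unfolding e_def using \<gamma>_nonneg \<gamma>_less_1 by (intro tendsto_intros LIMSEQ_power_zero) auto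
  then have e: "e \<longlonglongrightarrow> 0" by simp
  obtain Qs where Qs: "Qs \<in> Bspace S"
    and tail: "\<And>n x. x \<in> space S \<times> sphere 0 1 \<Longrightarrow> \<bar>Qs x - (T ^^ n) Q0 x\<bar> \<le> e n"
    using Bspace_complete[OF iterate_Bspace[OF Q0] abs_iterate_diff_le[OF Q0, folded e_def] e] by blast
  have "T Qs x = Qs x" if x: "x \<in> space S \<times> sphere 0 1" for x
  proof -
    have bound: "\<bar>T Qs x - Qs x\<bar> \<le> 2 * e n" for n
    proof -
      have "\<bar>T Qs x - T ((T ^^ n) Q0) x\<bar> \<le> \<gamma> * e n"
        by (rule abs_diff_image_le[OF Qs iterate_Bspace[OF Q0] tail x])
      moreover have "\<gamma> * e n \<le> e n" "e (Suc n) \<le> e n"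
        unfolding e_def using \<gamma>_nonneg \<gamma>_less_1 supnorm_diff_nonneg[OF maps_Bspace[OF Q0] Q0]
        by (auto intro!: mult_right_mono divide_right_mono mult_left_le_one_le simp: mult_le_cancel_left1)
      ultimately show ?thesis using tail[OF x, of "Suc n"] by simp
    qed
    have "(\<lambda>n. 2 * e n) \<longlonglongrightarrow> 2 * 0" by (intro tendsto_intros e)
    then have "\<bar>T Qs x - Qs x\<bar> \<le> 2 * 0" by (rule LIMSEQ_le_const) (use bound in blast)
    then show ?thesis by simp
  qed
  with Qs show ?thesis by blast
qed

lemma fixpoint_unique:
  assumes Q: "Q1 \<in> Bspace S" "Q2 \<in> Bspace S"
    and fixed: "\<forall>x\<in>space S \<times> sphere 0 1. T Q1 x = Q1 x" "\<forall>x\<in>space S \<times> sphere 0 1. T Q2 x = Q2 x"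
    and x: "x \<in> space S \<times> sphere 0 1"
  shows "Q1 x = Q2 x"
proof -
  define d where "d = supnorm S (\<lambda>x. Q1 x - Q2 x)"
  have "d = supnorm S (\<lambda>x. T Q1 x - T Q2 x)"
    unfolding d_def using fixed by (intro supnorm_cong) auto
  also have "\<dots> \<le> \<gamma> * d" unfolding d_def using Q by (rule contraction)
  finally have "d \<le> 0"
    using \<gamma>_less_1 supnorm_diff_nonneg[OF Q] by (simp add: d_def mult_le_cancel_right1)
  then show ?thesis using abs_diff_le_supnorm[OF Q x] by (simp add: d_def)
qed

end

section \<open>The smoothed Bellman operator\<close>

lemma space_ACT[simp]: "space ACT = binvecs"
  by (simp add: ACT_def space_restrict_space)

locale smoothed_bellman =
  fixes S :: "'s measure"
    and astar :: "'s \<Rightarrow> real^'m \<Rightarrow> real^'m"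
    and r :: "'s \<Rightarrow> real^'m \<Rightarrow> real"
    and P :: "'s \<Rightarrow> real^'m \<Rightarrow> 's measure"
    and \<pi> :: "'s \<Rightarrow> (real^'m) measure"
    and \<gamma> \<kappa> :: real
  assumes astar_binvecs: "s \<in> space S \<Longrightarrow> astar s c \<in> binvecs"
    and astar_meas: "(\<lambda>(s, c). astar s c) \<in> measurable (S \<Otimes>\<^sub>M SPH) ACT"
    and r_meas: "(\<lambda>(s, a). r s a) \<in> borel_measurable (S \<Otimes>\<^sub>M ACT)"
    and r_bounded: "\<exists>B. \<forall>s\<in>space S. \<forall>a\<in>binvecs. \<bar>r s a\<bar> \<le> B"
    and P_meas: "(\<lambda>(s, a). P s a) \<in> measurable (S \<Otimes>\<^sub>M ACT) (prob_algebra S)"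
    and \<pi>_meas: "\<pi> \<in> measurable S (prob_algebra SPH)"
    and \<gamma>_nonneg: "0 \<le> \<gamma>" and \<gamma>_less_1: "\<gamma> < 1"
begin

definition smoothed_Q :: "('s \<times> (real^'m) \<Rightarrow> real) \<Rightarrow> 's \<Rightarrow> real^'m \<Rightarrow> real" where
  "smoothed_Q Q s c = (\<integral>ct. Q (s, ct) \<partial>vmf \<kappa> c)"

definition state_value :: "('s \<times> (real^'m) \<Rightarrow> real) \<Rightarrow> 's \<Rightarrow> real" where
  "state_value Q s = (\<integral>c. smoothed_Q Q s c \<partial>\<pi> s)"

definition next_value :: "('s \<times> (real^'m) \<Rightarrow> real) \<Rightarrow> 's \<Rightarrow> real^'m \<Rightarrow> real" where
  "next_value Q s a = (\<integral>s'. state_value Q s' \<partial>P s a)"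

definition target :: "('s \<times> (real^'m) \<Rightarrow> real) \<Rightarrow> 's \<Rightarrow> real^'m \<Rightarrow> real" where
  "target Q s ct = r s (astar s ct) + \<gamma> * next_value Q s (astar s ct)"

abbreviation T :: "('s \<times> (real^'m) \<Rightarrow> real) \<Rightarrow> 's \<times> (real^'m) \<Rightarrow> real" where
  "T \<equiv> bellman r P \<pi> astar \<gamma> \<kappa>"

lemma T_eq_integral_target: "T Q (s, c) = (\<integral>ct. target Q s ct \<partial>vmf \<kappa> c)"
  by (simp add: bellman_def target_def next_value_def state_value_def smoothed_Q_def)

lemma P_space_prob_algebra: "s \<in> space S \<Longrightarrow> a \<in> binvecs \<Longrightarrow> P s a \<in> space (prob_algebra S)"
  using measurable_space[OF P_meas, of "(s, a)"] by (simp add: space_pair_measure)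

lemma prob_space_P: "s \<in> space S \<Longrightarrow> a \<in> binvecs \<Longrightarrow> prob_space (P s a)"
  using P_space_prob_algebra by (simp add: space_prob_algebra)

lemma sets_P: "s \<in> space S \<Longrightarrow> a \<in> binvecs \<Longrightarrow> sets (P s a) = sets S"
  using P_space_prob_algebra by (simp add: space_prob_algebra)

lemma space_P: "s \<in> space S \<Longrightarrow> a \<in> binvecs \<Longrightarrow> space (P s a) = space S"
  using sets_eq_imp_space_eq[OF sets_P] .

lemma \<pi>_space_prob_algebra: "s \<in> space S \<Longrightarrow> \<pi> s \<in> space (prob_algebra SPH)"
  by (rule measurable_space[OF \<pi>_meas])

lemma prob_space_\<pi>: "s \<in> space S \<Longrightarrow> prob_space (\<pi> s)"
  using \<pi>_space_prob_algebra by (simp add: space_prob_algebra)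

lemma sets_\<pi>: "s \<in> space S \<Longrightarrow> sets (\<pi> s) = sets SPH"
  using \<pi>_space_prob_algebra by (simp add: space_prob_algebra)

lemma space_\<pi>: "s \<in> space S \<Longrightarrow> space (\<pi> s) = sphere 0 1"
  using sets_eq_imp_space_eq[OF sets_\<pi>] by simp

lemma r_bound: obtains Br where "\<And>s a. s \<in> space S \<Longrightarrow> a \<in> binvecs \<Longrightarrow> \<bar>r s a\<bar> \<le> Br"
  using r_bounded by blast

context
  fixes Q :: "'s \<times> (real^'m) \<Rightarrow> real"
  assumes Q_meas[measurable]: "Q \<in> borel_measurable (S \<Otimes>\<^sub>M SPH)"
begin

lemma smoothed_Q_meas[measurable]: "(\<lambda>(s, c). smoothed_Q Q s c) \<in> borel_measurable (S \<Otimes>\<^sub>M SPH)"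
  unfolding smoothed_Q_def by (rule borel_measurable_integral_vmf[OF Q_meas])

lemma state_value_meas[measurable]: "state_value Q \<in> borel_measurable S"
  unfolding state_value_def
  by (rule integral_measurable_subprob_algebra2[OF smoothed_Q_meas measurable_prob_algebraD[OF \<pi>_meas]])

lemma next_value_meas[measurable]: "(\<lambda>(s, a). next_value Q s a) \<in> borel_measurable (S \<Otimes>\<^sub>M ACT)"
proof -
  have "(\<lambda>x. integral\<^sup>L ((\<lambda>(s, a). P s a) x) (state_value Q)) \<in> borel_measurable (S \<Otimes>\<^sub>M ACT)"
    by (rule integral_measurable_subprob_algebra2[OF _ measurable_prob_algebraD[OF P_meas]]) measurable
  then show ?thesis unfolding next_value_def by (simp add: case_prod_beta')
qed

lemma target_meas[measurable]: "(\<lambda>(s, ct). target Q s ct) \<in> borel_measurable (S \<Otimes>\<^sub>M SPH)"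
proof -
  have act[measurable]: "(\<lambda>(s, ct). (s, astar s ct)) \<in> measurable (S \<Otimes>\<^sub>M SPH) (S \<Otimes>\<^sub>M ACT)"
    using astar_meas by (simp add: case_prod_beta' measurable_Pair)
  have "(\<lambda>x. (\<lambda>(s, a). r s a) ((\<lambda>(s, ct). (s, astar s ct)) x)
          + \<gamma> * (\<lambda>(s, a). next_value Q s a) ((\<lambda>(s, ct). (s, astar s ct)) x)) \<in> borel_measurable (S \<Otimes>\<^sub>M SPH)"
    using measurable_compose[OF act r_meas] measurable_compose[OF act next_value_meas] by measurable
  then show ?thesis unfolding target_def by (simp add: case_prod_beta')
qed

lemma T_meas: "T Q \<in> borel_measurable (S \<Otimes>\<^sub>M SPH)"
proof -
  have "T Q = (\<lambda>(s, c). \<integral>ct. (\<lambda>(s, ct). target Q s ct) (s, ct) \<partial>vmf \<kappa> c)"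
    by (auto simp: fun_eq_iff T_eq_integral_target)
  with borel_measurable_integral_vmf[OF target_meas] show ?thesis by simp
qed

end

context
  fixes Q :: "'s \<times> (real^'m) \<Rightarrow> real" and B
  assumes Q_bound: "\<And>x. x \<in> space S \<times> sphere 0 1 \<Longrightarrow> \<bar>Q x\<bar> \<le> B"
begin

lemma smoothed_Q_bound: "s \<in> space S \<Longrightarrow> \<bar>smoothed_Q Q s c\<bar> \<le> B"
  unfolding smoothed_Q_def by (rule prob_space.abs_integral_le_const[OF prob_space_vmf]) (auto intro!: Q_bound)

lemma state_value_bound: "s \<in> space S \<Longrightarrow> \<bar>state_value Q s\<bar> \<le> B"
  unfolding state_value_def
  by (rule prob_space.abs_integral_le_const[OF prob_space_\<pi>]) (auto intro!: smoothed_Q_bound)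

lemma next_value_bound: "s \<in> space S \<Longrightarrow> a \<in> binvecs \<Longrightarrow> \<bar>next_value Q s a\<bar> \<le> B"
  unfolding next_value_def
  by (rule prob_space.abs_integral_le_const[OF prob_space_P]) (auto simp: space_P intro!: state_value_bound)

lemma target_bound:
  assumes Br: "\<And>s a. s \<in> space S \<Longrightarrow> a \<in> binvecs \<Longrightarrow> \<bar>r s a\<bar> \<le> Br" and s: "s \<in> space S"
  shows "\<bar>target Q s ct\<bar> \<le> Br + \<gamma> * B"
proof -
  have "\<bar>target Q s ct\<bar> \<le> \<bar>r s (astar s ct)\<bar> + \<gamma> * \<bar>next_value Q s (astar s ct)\<bar>"
    unfolding target_def using \<gamma>_nonneg by (simp add: abs_mult abs_triangle_ineq[THEN order_trans])
  also have "\<dots> \<le> Br + \<gamma> * B"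
    using Br[OF s astar_binvecs[OF s]] next_value_bound[OF s astar_binvecs[OF s]] \<gamma>_nonneg
    by (intro add_mono mult_left_mono) auto
  finally show ?thesis .
qed

lemma T_bound:
  assumes "\<And>s a. s \<in> space S \<Longrightarrow> a \<in> binvecs \<Longrightarrow> \<bar>r s a\<bar> \<le> Br" and "s \<in> space S"
  shows "\<bar>T Q (s, c)\<bar> \<le> Br + \<gamma> * B"
  unfolding T_eq_integral_target
  by (rule prob_space.abs_integral_le_const[OF prob_space_vmf]) (rule target_bound[OF assms])

end

context
  fixes Q1 Q2 :: "'s \<times> (real^'m) \<Rightarrow> real" and B1 B2 d
  assumes Q1_meas[measurable]: "Q1 \<in> borel_measurable (S \<Otimes>\<^sub>M SPH)"
    and Q2_meas[measurable]: "Q2 \<in> borel_measurable (S \<Otimes>\<^sub>M SPH)"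
    and Q1_bound: "\<And>x. x \<in> space S \<times> sphere 0 1 \<Longrightarrow> \<bar>Q1 x\<bar> \<le> B1"
    and Q2_bound: "\<And>x. x \<in> space S \<times> sphere 0 1 \<Longrightarrow> \<bar>Q2 x\<bar> \<le> B2"
    and Q_diff: "\<And>x. x \<in> space S \<times> sphere 0 1 \<Longrightarrow> \<bar>Q1 x - Q2 x\<bar> \<le> d"
begin

lemma smoothed_Q_diff: "s \<in> space S \<Longrightarrow> \<bar>smoothed_Q Q1 s c - smoothed_Q Q2 s c\<bar> \<le> d"
  unfolding smoothed_Q_def measurable_cong_sets[OF sets_vmf refl]
  by (rule prob_space.abs_integral_diff_le[OF prob_space_vmf, where Bf=B1 and Bg=B2])
     (auto simp: measurable_cong_sets[OF sets_vmf refl] intro: Q1_bound Q2_bound Q_diff measurable_Pair2)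

lemma state_value_diff: "s \<in> space S \<Longrightarrow> \<bar>state_value Q1 s - state_value Q2 s\<bar> \<le> d"
  unfolding state_value_def
  by (rule prob_space.abs_integral_diff_le[OF prob_space_\<pi>, where Bf=B1 and Bg=B2])
     (auto simp: measurable_cong_sets[OF sets_\<pi> refl] space_\<pi>
           intro: measurable_curry_section smoothed_Q_meas smoothed_Q_bound Q1_bound Q2_bound smoothed_Q_diff)

lemma next_value_diff:
  "s \<in> space S \<Longrightarrow> a \<in> binvecs \<Longrightarrow> \<bar>next_value Q1 s a - next_value Q2 s a\<bar> \<le> d"
  unfolding next_value_def
  by (rule prob_space.abs_integral_diff_le[OF prob_space_P, where Bf=B1 and Bg=B2])
     (auto simp: measurable_cong_sets[OF sets_P refl] space_P
           intro: state_value_meas state_value_bound Q1_bound Q2_bound state_value_diff)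

lemma T_diff:
  assumes Br: "\<And>s a. s \<in> space S \<Longrightarrow> a \<in> binvecs \<Longrightarrow> \<bar>r s a\<bar> \<le> Br" and s: "s \<in> space S"
  shows "\<bar>T Q1 (s, c) - T Q2 (s, c)\<bar> \<le> \<gamma> * d"
  unfolding T_eq_integral_target
proof (rule prob_space.abs_integral_diff_le[OF prob_space_vmf, where Bf="Br + \<gamma> * B1" and Bg="Br + \<gamma> * B2"])
  fix ct
  have "target Q1 s ct - target Q2 s ct = \<gamma> * (next_value Q1 s (astar s ct) - next_value Q2 s (astar s ct))"
    unfolding target_def by (simp add: algebra_simps)
  then show "\<bar>target Q1 s ct - target Q2 s ct\<bar> \<le> \<gamma> * d"
    using next_value_diff[OF s astar_binvecs[OF s]] \<gamma>_nonneg by (simp add: abs_mult mult_left_mono)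
qed (auto simp: measurable_cong_sets[OF sets_vmf refl] s Q1_bound Q2_bound Br
          intro!: measurable_curry_section[OF target_meas] target_bound)

end

lemma T_Bspace:
  assumes "Q \<in> Bspace S"
  shows "T Q \<in> Bspace S"
proof -
  obtain B Br where "Q \<in> borel_measurable (S \<Otimes>\<^sub>M SPH)" "\<And>x. x \<in> space S \<times> sphere 0 1 \<Longrightarrow> \<bar>Q x\<bar> \<le> B"
    and "\<And>s a. s \<in> space S \<Longrightarrow> a \<in> binvecs \<Longrightarrow> \<bar>r s a\<bar> \<le> Br"
    using assms by (metis BspaceE r_bound)
  then show ?thesis
    unfolding Bspace_iff by (auto intro!: T_meas exI[of _ "Br + \<gamma> * B"] T_bound)
qed

lemma T_contraction:
  assumes "Q1 \<in> Bspace S" "Q2 \<in> Bspace S"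
  shows "supnorm S (\<lambda>x. T Q1 x - T Q2 x) \<le> \<gamma> * supnorm S (\<lambda>x. Q1 x - Q2 x)"
proof (rule supnorm_le)
  obtain B1 B2 Br where Q: "Q1 \<in> borel_measurable (S \<Otimes>\<^sub>M SPH)" "Q2 \<in> borel_measurable (S \<Otimes>\<^sub>M SPH)"
    "\<And>x. x \<in> space S \<times> sphere 0 1 \<Longrightarrow> \<bar>Q1 x\<bar> \<le> B1" "\<And>x. x \<in> space S \<times> sphere 0 1 \<Longrightarrow> \<bar>Q2 x\<bar> \<le> B2"
    and Br: "\<And>s a. s \<in> space S \<Longrightarrow> a \<in> binvecs \<Longrightarrow> \<bar>r s a\<bar> \<le> Br"
    using assms by (metis BspaceE r_bound)
  show "0 \<le> \<gamma> * supnorm S (\<lambda>x. Q1 x - Q2 x)"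
    using \<gamma>_nonneg supnorm_diff_nonneg[OF assms] by simp
  fix x :: "'s \<times> (real^'m)" assume "x \<in> space S \<times> sphere 0 1"
  then obtain s c where x: "x = (s, c)" "s \<in> space S" by auto
  show "\<bar>T Q1 x - T Q2 x\<bar> \<le> \<gamma> * supnorm S (\<lambda>x. Q1 x - Q2 x)"
    unfolding x(1) by (rule T_diff[OF Q abs_diff_le_supnorm[OF assms] Br x(2)])
qed

lemma T_smooth_on_sphere:
  assumes "Q \<in> Bspace S" "s \<in> space S"
  shows "smooth_on_sphere (\<lambda>c. T Q (s, c))"
proof -
  obtain B Br where Q: "Q \<in> borel_measurable (S \<Otimes>\<^sub>M SPH)" "\<And>x. x \<in> space S \<times> sphere 0 1 \<Longrightarrow> \<bar>Q x\<bar> \<le> B"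
    and Br: "\<And>s a. s \<in> space S \<Longrightarrow> a \<in> binvecs \<Longrightarrow> \<bar>r s a\<bar> \<le> Br"
    using assms(1) by (metis BspaceE r_bound)
  have g: "target Q s \<in> borel_measurable surface_measure"
    unfolding measurable_cong_sets[OF sets_surface_measure refl]
    by (rule measurable_curry_section[OF target_meas[OF Q(1)] assms(2)])
  have "(\<lambda>c. exp_moment \<kappa> (target Q s) c * (1 / exp_moment \<kappa> (\<lambda>_. 1) c)) \<in> moment_class \<kappa>"
    by (intro moment_class.mult moment_class.inverse_normaliser moment_class.exp_moment[OF g])
       (rule target_bound[OF Q(2) Br assms(2)])
  then have "smooth_on UNIV (\<lambda>c. T Q (s, c))"
    by (simp add: T_eq_integral_target integral_vmf[OF g] smooth_on_moment_class)
  then show ?thesis unfolding smooth_on_sphere_def by blast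
qed

lemma fixpoint_smooth_on_sphere:
  assumes "Q \<in> Bspace S" "\<forall>x\<in>space S \<times> sphere 0 1. T Q x = Q x" "s \<in> space S"
  shows "smooth_on_sphere (\<lambda>c. Q (s, c))"
  using T_smooth_on_sphere[OF assms(1,3)] smooth_on_sphere_cong[of "\<lambda>c. T Q (s, c)" "\<lambda>c. Q (s, c)"] assms(2,3)
  by auto

end

sublocale smoothed_bellman \<subseteq> Bspace_contraction S T \<gamma>
  using T_Bspace T_contraction \<gamma>_nonneg \<gamma>_less_1 by unfold_locales

theorem theorem1:
  fixes S :: "'s measure"
    and A :: "'s \<Rightarrow> (real^'m) set"
    and astar :: "'s \<Rightarrow> real^'m \<Rightarrow> real^'m"
    and r :: "'s \<Rightarrow> real^'m \<Rightarrow> real"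
    and P :: "'s \<Rightarrow> real^'m \<Rightarrow> 's measure"
    and \<pi> :: "'s \<Rightarrow> (real^'m) measure"
    and \<gamma> \<kappa> :: real
  assumes A_fin: "\<And>s. s \<in> space S \<Longrightarrow> finite (A s) \<and> A s \<noteq> {} \<and> A s \<subseteq> binvecs"
    and astar_opt: "\<And>s c. s \<in> space S \<Longrightarrow> astar s c \<in> A s \<and> (\<forall>a\<in>A s. c \<bullet> astar s c \<le> c \<bullet> a)"
    and astar_meas: "(\<lambda>(s, c). astar s c) \<in> measurable (S \<Otimes>\<^sub>M SPH) ACT"
    and r_meas: "(\<lambda>(s, a). r s a) \<in> borel_measurable (S \<Otimes>\<^sub>M ACT)"
    and r_bdd: "\<exists>B. \<forall>s\<in>space S. \<forall>a\<in>binvecs. \<bar>r s a\<bar> \<le> B"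
    and P_meas: "(\<lambda>(s, a). P s a) \<in> measurable (S \<Otimes>\<^sub>M ACT) (prob_algebra S)"
    and \<pi>_meas: "\<pi> \<in> measurable S (prob_algebra SPH)"
    and \<gamma>: "0 \<le> \<gamma>" "\<gamma> < 1"
    and \<kappa>: "0 < \<kappa>"
  defines "T \<equiv> bellman r P \<pi> astar \<gamma> \<kappa>"
  shows
    "(\<forall>Q\<in>Bspace S. T Q \<in> Bspace S)
     \<and> (\<forall>Q1\<in>Bspace S. \<forall>Q2\<in>Bspace S.
          supnorm S (\<lambda>x. T Q1 x - T Q2 x) \<le> \<gamma> * supnorm S (\<lambda>x. Q1 x - Q2 x))
     \<and> (\<exists>Qs\<in>Bspace S. (\<forall>x\<in>space S \<times> sphere 0 1. T Qs x = Qs x)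
          \<and> (\<forall>Q\<in>Bspace S. (\<forall>x\<in>space S \<times> sphere 0 1. T Q x = Q x)
                 \<longrightarrow> (\<forall>x\<in>space S \<times> sphere 0 1. Q x = Qs x)))
     \<and> (\<forall>Q\<in>Bspace S. \<forall>s\<in>space S. smooth_on_sphere (\<lambda>c. T Q (s, c)))
     \<and> (\<forall>Q\<in>Bspace S. (\<forall>x\<in>space S \<times> sphere 0 1. T Q x = Q x)
          \<longrightarrow> (\<forall>s\<in>space S. smooth_on_sphere (\<lambda>c. Q (s, c))))"
proof -
  interpret smoothed_bellman S astar r P \<pi> \<gamma> \<kappa>
    using A_fin astar_opt astar_meas r_meas r_bdd P_meas \<pi>_meas \<gamma> by unfold_locales blast+
  show ?thesis
    unfolding T_def
    using T_Bspace T_contraction fixpoint_exists fixpoint_unique T_smooth_on_sphere fixpoint_smooth_on_sphere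
    by blast
qed

end
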